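(* Let $L$ be a finite set of horizontal line segments in an axis-parallel rectangle $R$ of height $h$, let $\rho>0$, and let $S_1,\dots,S_t$, $t=\lceil h/(\sqrt3\rho)\rceil$, be the horizontal strips of $R$ of width $\sqrt3\rho$. Let $Q_j$ and $Z_j$ ($j=1,\dots,t$) be the output point set and the number of iterations of the strip-greedy procedure described in the context, applied to strip $S_j$. Then (a) $\bigcup_{j=1}^t Q_j$ covers every segment of $L$ and $\left|\bigcup_{j=1}^t Q_j\right| \le 6\,OPT_h$, and (b) $\frac13\sum_{j=1}^t Z_j \le OPT_h$, where $OPT_h$ is the minimum number of sensors of range $\rho$ needed to cover all segments of $L$.
   Context: A sensor at point $s$ with range $\rho$ covers a segment $\ell$ if $\operatorname{dist}(s,\ell)\le\rho$; the hippodrome $H(\ell,\rho)$ is the set of points at distance at most $\rho$ from $\ell$. Write $R=[x_0,x_m]\times[y_0,y_0+h]$ and $S_i = R\cap\{y_0+(i-1)\sqrt3\rho \le y < y_0+i\sqrt3\rho\}$ (the last strip closed at the top); each horizontal segment lies in exactly one strip, and $L_i$ denotes the segments of $L$ lying in $S_i$. Strip-greedy procedure for $S_i$: set $Q_i=\emptyset$ and repeat while $L_i\neq\emptyset$: let $\ell_1\in L_i$ be the segment whose right endpoint $v_1$ has the smallest $x$-coordinate; let $L_i^1$ be the set of segments of $L_i$ whose hippodromes intersect $H(\ell_1,\rho)$ (i.e. at distance at most $2\rho$ from $\ell_1$); let $C$ be the $2\rho\times\sqrt3\rho$ rectangle inside $S_i$ (spanning the strip vertically) whose left side lies on the vertical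 line through $v_1$; split $C$ into two $\rho\times\sqrt3\rho$ rectangles and add their two centers to $Q_i$ (each of these rectangles is contained in the disk of radius $\rho$ about its center); delete $L_i^1\cup\{\ell_1\}$ from $L_i$. $Z_i$ is the number of iterations performed, so $|Q_i|=2Z_i$. *)

theory Defs
  imports "HOL-Analysis.Analysis"
begin

text \<open>A horizontal segment is encoded as a triple (a, b, y) with a \<le> b: it is the
  closed segment from (a,y) to (b,y). Its right endpoint has x-coordinate b.\<close>

type_synonym hseg = "real \<times> real \<times> real"

definition seg_left :: "hseg \<Rightarrow> real" where "seg_left l = fst l"
definition seg_right :: "hseg \<Rightarrow> real" where "seg_right l = fst (snd l)"
definition seg_y :: "hseg \<Rightarrow> real" where "seg_y l = snd (snd l)"

definition seg_set :: "hseg \<Rightarrow> (real \<times> real) set" where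
  "seg_set l = closed_segment (seg_left l, seg_y l) (seg_right l, seg_y l)"

definition covers :: "real \<Rightarrow> real \<times> real \<Rightarrow> hseg \<Rightarrow> bool" where
  "covers \<rho> s l \<longleftrightarrow> infdist s (seg_set l) \<le> \<rho>"

definition hippodrome :: "hseg \<Rightarrow> real \<Rightarrow> (real \<times> real) set" where
  "hippodrome l \<rho> = {p. infdist p (seg_set l) \<le> \<rho>}"

definition seg_in_rect :: "real \<Rightarrow> real \<Rightarrow> real \<Rightarrow> real \<Rightarrow> hseg \<Rightarrow> bool" where
  "seg_in_rect x0 xm y0 h l \<longleftrightarrow>
     x0 \<le> seg_left l \<and> seg_left l \<le> seg_right l \<and> seg_right l \<le> xm \<and>
     y0 \<le> seg_y l \<and> seg_y l \<le> y0 + h"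

definition num_strips :: "real \<Rightarrow> real \<Rightarrow> nat" where
  "num_strips h \<rho> = nat \<lceil>h / (sqrt 3 * \<rho>)\<rceil>"

text \<open>Segment l lies in strip S_i (the last strip, i = t, closed at the top).\<close>
definition in_strip :: "real \<Rightarrow> real \<Rightarrow> real \<Rightarrow> nat \<Rightarrow> hseg \<Rightarrow> bool" where
  "in_strip y0 h \<rho> i l \<longleftrightarrow>
     y0 + (real i - 1) * (sqrt 3 * \<rho>) \<le> seg_y l \<and>
     (seg_y l < y0 + real i * (sqrt 3 * \<rho>) \<or> (i = num_strips h \<rho> \<and> seg_y l = y0 + h))"

definition strip_segs :: "hseg set \<Rightarrow> real \<Rightarrow> real \<Rightarrow> real \<Rightarrow> nat \<Rightarrow> hseg set" where
  "strip_segs L y0 h \<rho> i = {l \<in> L. in_strip y0 h \<rho> i l}"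

text \<open>The two centers added in an iteration whose leftmost right endpoint has x-coordinate vx:
  centers of the two \<rho> \<times> \<surd>3\<rho> halves of C = [vx, vx+2\<rho>] \<times> [y0+(i-1)\<surd>3\<rho>, y0+i\<surd>3\<rho>].\<close>
definition greedy_centers :: "real \<Rightarrow> real \<Rightarrow> nat \<Rightarrow> real \<Rightarrow> (real \<times> real) set" where
  "greedy_centers \<rho> y0 i vx =
     (let ym = y0 + (real i - 1/2) * (sqrt 3 * \<rho>)
      in {(vx + \<rho>/2, ym), (vx + 3*\<rho>/2, ym)})"

text \<open>Strip-greedy procedure on strip i as a relation:
  strip_greedy \<rho> y0 i Li Q Z means that some execution of the procedure
  (ties in the choice of l1 broken arbitrarily) on the segment set Li outputs Q after Z iterations.\<close>
inductive strip_greedy :: "real \<Rightarrow> real \<Rightarrow> nat \<Rightarrow> hseg set \<Rightarrow> (real \<times> real) set \<Rightarrow> nat \<Rightarrow> bool"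
  for \<rho> y0 i where
  stop: "strip_greedy \<rho> y0 i {} {} 0"
| step: "\<lbrakk> l1 \<in> Li; \<forall>l\<in>Li. seg_right l1 \<le> seg_right l;
          strip_greedy \<rho> y0 i
            (Li - ({l1} \<union> {l\<in>Li. hippodrome l \<rho> \<inter> hippodrome l1 \<rho> \<noteq> {}})) Q Z \<rbrakk>
        \<Longrightarrow> strip_greedy \<rho> y0 i Li (greedy_centers \<rho> y0 i (seg_right l1) \<union> Q) (Suc Z)"

definition OPT :: "real \<Rightarrow> hseg set \<Rightarrow> nat" where
  "OPT \<rho> L = (LEAST n. \<exists>P. finite P \<and> card P = n \<and> (\<forall>l\<in>L. \<exists>s\<in>P. covers \<rho> s l))"

end

theory Submission
  imports Defs
begin

text \<open>
  Within one strip, every iteration of the greedy procedure picks the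
  segment l1 with leftmost right endpoint v1; all segments it deletes start at most
  2\<rho> to the right of v1 and lie in a band of height \<surd>3\<rho>, so they are covered by the
  two centers placed in [v1, v1+2\<rho>].  Hence Q_i covers L_i and |Q_i| \<le> 2 Z_i.
  Moreover the chosen segments l1 have pairwise disjoint hippodromes, so each strip
  yields Z_i segments that no sensor can cover two of.  A single sensor p reaches
  heights differing by at most 2\<rho> < 2\<surd>3\<rho>, hence segments of at most three
  consecutive strips.  Assigning each chosen segment to a sensor of an optimal cover
  therefore charges every sensor at most three times: \<Sum> Z_i \<le> 3 OPT, and
  |\<Union> Q_i| \<le> 2 \<Sum> Z_i \<le> 6 OPT.
\<close>

section \<open>Geometry of horizontal segments\<close>

lemma seg_set_eq:
  assumes "seg_left l \<le> seg_right l"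
  shows "seg_set l = {seg_left l..seg_right l} \<times> {seg_y l}"
  unfolding seg_set_def using assms
  by (simp add: closed_segment_same_snd closed_segment_eq_real_ivl1)

lemma covers_nearest_point:
  assumes "covers \<rho> s l" "seg_left l \<le> seg_right l"
  shows "\<exists>x. seg_left l \<le> x \<and> x \<le> seg_right l \<and> dist s (x, seg_y l) \<le> \<rho>"
proof -
  have "closed (seg_set l)" "seg_set l \<noteq> {}"
    using assms(2) by (auto simp: seg_set_eq closed_Times)
  then obtain q where "q \<in> seg_set l" "infdist s (seg_set l) = dist s q"
    using infdist_attains_inf by blast
  then show ?thesis using assms by (auto simp: seg_set_eq covers_def)
qed

lemma dist_coord_le:
  fixes s :: "real \<times> real"
  shows "\<bar>fst s - x\<bar> \<le> dist s (x, y)" "\<bar>snd s - y\<bar> \<le> dist s (x, y)"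
  using dist_fst_le[of s "(x,y)"] dist_snd_le[of s "(x,y)"] by (auto simp: dist_real_def)

lemma hippodromes_meet_left_bound:
  assumes "hippodrome a \<rho> \<inter> hippodrome b \<rho> \<noteq> {}"
    "seg_left a \<le> seg_right a" "seg_left b \<le> seg_right b"
  shows "seg_left a \<le> seg_right b + 2 * \<rho>"
proof -
  obtain p where "covers \<rho> p a" "covers \<rho> p b"
    using assms(1) unfolding hippodrome_def covers_def by auto
  then obtain xa xb where "seg_left a \<le> xa" "dist p (xa, seg_y a) \<le> \<rho>"
      "xb \<le> seg_right b" "dist p (xb, seg_y b) \<le> \<rho>"
    using covers_nearest_point assms(2,3) by meson
  then show ?thesis
    using dist_coord_le(1)[of p xa "seg_y a"] dist_coord_le(1)[of p xb "seg_y b"] by linarith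
qed

definition in_band :: "real \<Rightarrow> real \<Rightarrow> nat \<Rightarrow> hseg \<Rightarrow> bool" where
  "in_band \<rho> y0 i l \<longleftrightarrow> seg_left l \<le> seg_right l \<and>
     y0 + (real i - 1) * (sqrt 3 * \<rho>) \<le> seg_y l \<and> seg_y l \<le> y0 + real i * (sqrt 3 * \<rho>)"

text \<open>The two greedy centers placed at v cover every segment of band i that reaches
  the vertical line x = v and starts before x = v + 2\<rho>: each half of the rectangle
  C = [v, v+2\<rho>] \<times> band is a \<rho> \<times> \<surd>3\<rho> box of half-diagonal exactly \<rho>.\<close>
lemma greedy_centers_cover:
  assumes "\<rho> > 0" "in_band \<rho> y0 i l" "v \<le> seg_right l" "seg_left l \<le> v + 2 * \<rho>"
  shows "\<exists>q\<in>greedy_centers \<rho> y0 i v. covers \<rho> q l"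
proof -
  define x where "x = max (seg_left l) v"
  define ym where "ym = y0 + (real i - 1/2) * (sqrt 3 * \<rho>)"
  have x: "seg_left l \<le> x" "x \<le> seg_right l" "v \<le> x" "x \<le> v + 2 * \<rho>"
    using assms unfolding x_def in_band_def by auto
  have "\<bar>ym - seg_y l\<bar> \<le> sqrt 3 * \<rho> / 2"
    using assms(2) unfolding ym_def in_band_def by (auto simp: algebra_simps abs_if)
  then have dy: "(ym - seg_y l)^2 \<le> 3 * \<rho>^2 / 4"
    using power_mono[of "\<bar>ym - seg_y l\<bar>" "sqrt 3 * \<rho> / 2" 2]
    by (simp add: power_mult_distrib power_divide)
  obtain cx where cx: "(cx, ym) \<in> greedy_centers \<rho> y0 i v" "\<bar>cx - x\<bar> \<le> \<rho> / 2"
  proof (cases "x \<le> v + \<rho>")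
    case True
    then show ?thesis using that[of "v + \<rho>/2"] x
      by (auto simp: greedy_centers_def ym_def Let_def abs_if)
  next
    case False
    then show ?thesis using that[of "v + 3*\<rho>/2"] x
      by (auto simp: greedy_centers_def ym_def Let_def abs_if)
  qed
  have dx: "(cx - x)^2 \<le> \<rho>^2 / 4"
    using power_mono[OF cx(2), of 2] by (simp add: power_divide)
  have "dist (cx, ym) (x, seg_y l) \<le> \<rho>"
    unfolding dist_Pair_Pair dist_real_def
    using dx dy assms(1) by (intro real_le_lsqrt) (auto simp: power2_abs)
  moreover have "(x, seg_y l) \<in> seg_set l"
    using x by (simp add: seg_set_eq)
  ultimately have "covers \<rho> (cx, ym) l"
    unfolding covers_def by (simp add: infdist_le2)
  then show ?thesis using cx(1) by blast
qed

section \<open>Invariants of the strip-greedy procedure\<close>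

definition hipp_independent :: "real \<Rightarrow> hseg set \<Rightarrow> bool" where
  "hipp_independent \<rho> C \<longleftrightarrow>
     (\<forall>a\<in>C. \<forall>b\<in>C. a \<noteq> b \<longrightarrow> hippodrome a \<rho> \<inter> hippodrome b \<rho> = {})"

lemma hipp_independent_covers_one:
  assumes "hipp_independent \<rho> C" "a \<in> C" "b \<in> C" "covers \<rho> p a" "covers \<rho> p b"
  shows "a = b"
  using assms unfolding hipp_independent_def hippodrome_def covers_def by blast

lemma strip_greedy_card:
  assumes "strip_greedy \<rho> y0 i Li Q Z"
  shows "finite Q \<and> card Q \<le> 2 * Z"
  using assms
proof (induction rule: strip_greedy.induct)
  case stop
  then show ?case by simp
next
  case (step l1 Li Q Z)
  let ?G = "greedy_centers \<rho> y0 i (seg_right l1)"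
  have "finite ?G" "card ?G \<le> 2"
    by (auto simp: greedy_centers_def Let_def card_insert_if)
  then show ?case using step.IH card_Un_le[of ?G Q] by auto
qed

text \<open>The output of the procedure covers every segment of its (banded) input: the
  segments deleted together with l1 are covered by the two new centers.\<close>
lemma strip_greedy_covers:
  assumes "strip_greedy \<rho> y0 i Li Q Z" "\<rho> > 0" "\<forall>l\<in>Li. in_band \<rho> y0 i l"
  shows "\<forall>l\<in>Li. \<exists>q\<in>Q. covers \<rho> q l"
  using assms
proof (induction rule: strip_greedy.induct)
  case stop
  then show ?case by simp
next
  case (step l1 Li Q Z)
  let ?R = "Li - ({l1} \<union> {l\<in>Li. hippodrome l \<rho> \<inter> hippodrome l1 \<rho> \<noteq> {}})"
  show ?case
  proof
    fix l assume l: "l \<in> Li"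
    show "\<exists>q\<in>greedy_centers \<rho> y0 i (seg_right l1) \<union> Q. covers \<rho> q l"
    proof (cases "l \<in> ?R")
      case True
      then show ?thesis using step.IH step.prems by blast
    next
      case False
      have band: "in_band \<rho> y0 i l" "in_band \<rho> y0 i l1"
        using step.prems l step.hyps(1) by auto
      have "seg_left l \<le> seg_right l1 + 2 * \<rho>"
      proof (cases "l = l1")
        case True
        then show ?thesis using band step.prems(1) by (auto simp: in_band_def)
      next
        case False
        then have "hippodrome l \<rho> \<inter> hippodrome l1 \<rho> \<noteq> {}" using \<open>l \<notin> ?R\<close> l by auto
        then show ?thesis using hippodromes_meet_left_bound band by (auto simp: in_band_def)
      qed
      then show ?thesis
        using greedy_centers_cover[OF step.prems(1) band(1)] step.hyps(2) l by blast
    qed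
  qed
qed

text \<open>The segments l1 chosen in the iterations form an independent set of size Z.\<close>
lemma strip_greedy_independent:
  assumes "strip_greedy \<rho> y0 i Li Q Z"
  shows "\<exists>C\<subseteq>Li. finite C \<and> card C = Z \<and> hipp_independent \<rho> C"
  using assms
proof (induction rule: strip_greedy.induct)
  case stop
  then show ?case by (auto simp: hipp_independent_def)
next
  case (step l1 Li Q Z)
  then obtain C where C: "C \<subseteq> Li - ({l1} \<union> {l\<in>Li. hippodrome l \<rho> \<inter> hippodrome l1 \<rho> \<noteq> {}})"
      "finite C" "card C = Z" "hipp_independent \<rho> C"
    by blast
  have "insert l1 C \<subseteq> Li" "finite (insert l1 C)" "card (insert l1 C) = Suc Z"
    using C step.hyps(1) by (auto simp: card_insert_if)
  moreover have "hipp_independent \<rho> (insert l1 C)"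
    using C(1,4) unfolding hipp_independent_def by blast
  ultimately show ?case by blast
qed

section \<open>Packing across strips\<close>

text \<open>A sensor covering segments of bands j and j' satisfies j' \<le> j + 2: the two heights
  differ by at most 2\<rho>, whereas bands j and j' are (j' - j - 1)\<surd>3\<rho> apart.\<close>
lemma covering_bands_close:
  assumes "\<rho> > 0" "in_band \<rho> y0 j c" "in_band \<rho> y0 j' c'" "covers \<rho> p c" "covers \<rho> p c'"
  shows "j' \<le> j + 2"
proof (rule ccontr)
  assume "\<not> j' \<le> j + 2"
  then have gap: "2 * (sqrt 3 * \<rho>) \<le> (real j' - real j - 1) * (sqrt 3 * \<rho>)"
    using assms(1) by (intro mult_right_mono) auto
  obtain x x' where "dist p (x, seg_y c) \<le> \<rho>" "dist p (x', seg_y c') \<le> \<rho>"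
    using covers_nearest_point assms(2-5) unfolding in_band_def by meson
  then have "seg_y c' - seg_y c \<le> 2 * \<rho>"
    using dist_coord_le(2)[of p "seg_y c" x] dist_coord_le(2)[of p "seg_y c'" x'] by linarith
  then have "(real j' - real j - 1) * (sqrt 3 * \<rho>) \<le> 2 * \<rho>"
    using assms(2,3) unfolding in_band_def by (simp add: algebra_simps)
  moreover have "2 * \<rho> < 2 * (sqrt 3 * \<rho>)" using assms(1) by simp
  ultimately show False using gap by linarith
qed

text \<open>Among segments taken from independent sets, one per band index, a single
  sensor covers at most three: at most one per band and at most three bands.\<close>
lemma sensor_covers_at_most_three:
  assumes "\<rho> > 0" "F \<subseteq> Sigma J C" "finite F"
    and "\<forall>j\<in>J. hipp_independent \<rho> (C j) \<and> (\<forall>c\<in>C j. in_band \<rho> y0 j c)"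
    and "\<forall>(j, c)\<in>F. covers \<rho> p c"
  shows "card F \<le> 3"
proof -
  have "inj_on fst F"
  proof (rule inj_onI)
    fix a b assume ab: "a \<in> F" "b \<in> F" "fst a = fst b"
    then have "a \<in> Sigma J C" "b \<in> Sigma J C" using assms(2) by auto
    moreover have "covers \<rho> p (snd a)" "covers \<rho> p (snd b)"
      using assms(5) ab(1,2) by auto
    ultimately have "snd a = snd b"
      using assms(4) ab(3) hipp_independent_covers_one by (metis SigmaE2 prod.collapse)
    then show "a = b" using ab(3) by (simp add: prod_eq_iff)
  qed
  then have "card F = card (fst ` F)" by (rule card_image[symmetric])
  also have "\<dots> \<le> 3"
  proof (cases "F = {}")
    case False
    define m where "m = Min (fst ` F)"
    have "fst ` F \<subseteq> {m..m+2}"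
    proof
      fix j assume j: "j \<in> fst ` F"
      have m: "m \<in> fst ` F" "m \<le> j" using False j assms(3) unfolding m_def by auto
      obtain c c' where "(m, c) \<in> F" "(j, c') \<in> F" using m(1) j by force
      then have "j \<le> m + 2"
        using covering_bands_close[OF assms(1)] assms(2,4,5) by blast
      then show "j \<in> {m..m+2}" using m(2) by simp
    qed
    then show ?thesis using card_mono[of "{m..m+2}"] by fastforce
  qed simp
  finally show ?thesis .
qed

lemma independent_bands_packing:
  assumes "\<rho> > 0" "finite J" "finite P"
    and "\<forall>j\<in>J. finite (C j) \<and> hipp_independent \<rho> (C j) \<and> (\<forall>c\<in>C j. in_band \<rho> y0 j c)"
    and "\<forall>j\<in>J. \<forall>c\<in>C j. \<exists>p\<in>P. covers \<rho> p c"
  shows "(\<Sum>j\<in>J. card (C j)) \<le> 3 * card P"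
proof -
  define A where "A = Sigma J C"
  have finA: "finite A" using assms(2,4) unfolding A_def by auto
  define g where "g a = (SOME p. p \<in> P \<and> covers \<rho> p (snd a))" for a :: "nat \<times> hseg"
  have g: "g a \<in> P \<and> covers \<rho> (g a) (snd a)" if "a \<in> A" for a
  proof -
    have "\<exists>p. p \<in> P \<and> covers \<rho> p (snd a)"
      using assms(5) that unfolding A_def by (metis SigmaE snd_conv)
    then show ?thesis unfolding g_def by (rule someI_ex)
  qed
  have gA: "g ` A \<subseteq> P" using g by blast
  have "(\<Sum>j\<in>J. card (C j)) = card A"
    unfolding A_def using assms(2,4) by (simp add: card_SigmaI)
  also have "\<dots> = (\<Sum>p\<in>P. card {a\<in>A. g a = p})"
    using sum.group[OF finA assms(3) gA, of "\<lambda>_. 1::nat"] by simp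
  also have "\<dots> \<le> (\<Sum>p\<in>P. 3)"
  proof (rule sum_mono)
    fix p
    have "\<forall>(j, c)\<in>{a\<in>A. g a = p}. covers \<rho> p c"
      using g by auto
    moreover have "{a\<in>A. g a = p} \<subseteq> Sigma J C" "finite {a\<in>A. g a = p}"
      using finA unfolding A_def by auto
    ultimately show "card {a\<in>A. g a = p} \<le> 3"
      using sensor_covers_at_most_three[OF assms(1)] assms(4) by blast
  qed
  finally show ?thesis by simp
qed

section \<open>The strip decomposition\<close>

lemma num_strips_bounds:
  assumes "h > 0" "\<rho> > 0"
  shows "h \<le> real (num_strips h \<rho>) * (sqrt 3 * \<rho>)" "num_strips h \<rho> \<ge> 1"
proof -
  have sp: "sqrt 3 * \<rho> > 0" using assms by simp
  then have q: "h / (sqrt 3 * \<rho>) > 0" using assms by simp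
  then have "real (num_strips h \<rho>) = of_int \<lceil>h / (sqrt 3 * \<rho>)\<rceil>"
    unfolding num_strips_def by (simp add: ceiling_le_zero not_le)
  then have "h / (sqrt 3 * \<rho>) \<le> real (num_strips h \<rho>)" by simp
  then show "h \<le> real (num_strips h \<rho>) * (sqrt 3 * \<rho>)" using sp by (simp add: divide_le_eq)
  show "num_strips h \<rho> \<ge> 1"
    using q unfolding num_strips_def by (simp add: one_le_ceiling le_nat_iff)
qed

lemma strip_segs_in_band:
  assumes "h > 0" "\<rho> > 0" "\<forall>l\<in>L. seg_in_rect x0 xm y0 h l" "l \<in> strip_segs L y0 h \<rho> j"
  shows "in_band \<rho> y0 j l"
  using assms num_strips_bounds(1)[OF assms(1,2)]
  by (auto simp: in_band_def in_strip_def seg_in_rect_def strip_segs_def)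

text \<open>Every segment of R lies in some strip: strip \<lfloor>(y - y0)/\<surd>3\<rho>\<rfloor> + 1, or the last
  (top-closed) strip if the segment lies on the top side of R.\<close>
lemma seg_in_some_strip:
  assumes "h > 0" "\<rho> > 0" "seg_in_rect x0 xm y0 h l"
  shows "\<exists>j\<in>{1..num_strips h \<rho>}. in_strip y0 h \<rho> j l"
proof -
  define s where "s = sqrt 3 * \<rho>"
  define t where "t = num_strips h \<rho>"
  define q where "q = (seg_y l - y0) / s"
  have sp: "s > 0" using assms unfolding s_def by simp
  have yl: "y0 \<le> seg_y l" "seg_y l \<le> y0 + h" using assms(3) by (auto simp: seg_in_rect_def)
  have ht: "h \<le> real t * s" "t \<ge> 1"
    using num_strips_bounds[OF assms(1,2)] unfolding s_def t_def by auto
  have q0: "q \<ge> 0" using yl sp unfolding q_def by simp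
  have yq: "seg_y l = y0 + q * s" using sp unfolding q_def by simp
  show ?thesis
  proof (cases "q < real t")
    case True
    define j where "j = nat \<lfloor>q\<rfloor> + 1"
    have jr: "real j - 1 \<le> q" "q < real j" using q0 unfolding j_def by linarith+
    then have "real j < real (t + 1)" using True by simp
    then have "j \<in> {1..t}" unfolding j_def by (simp only: of_nat_less_iff) simp
    moreover have "(real j - 1) * s \<le> q * s" "q * s < real j * s"
      using jr sp by (simp_all add: mult_right_mono)
    ultimately show ?thesis using yq unfolding in_strip_def s_def t_def by auto
  next
    case False
    then have "real t * s \<le> q * s" "(real t - 1) * s \<le> q * s"
      using sp by (simp_all add: mult_right_mono)
    moreover have "q * s \<le> h" using yl yq by simp
    ultimately have "seg_y l = y0 + h" "y0 + (real t - 1) * s \<le> seg_y l"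
      using yq ht by linarith+
    then have "in_strip y0 h \<rho> t l" unfolding in_strip_def s_def t_def by blast
    then show ?thesis using ht(2) unfolding t_def by auto
  qed
qed

text \<open>OPT is attained: the left endpoints form a finite cover, so the least size of a
  cover is realised by some finite cover.\<close>
lemma OPT_attained:
  assumes "finite L" "\<rho> > 0" "\<forall>l\<in>L. seg_left l \<le> seg_right l"
  obtains P where "finite P" "card P = OPT \<rho> L" "\<forall>l\<in>L. \<exists>s\<in>P. covers \<rho> s l"
proof -
  have "covers \<rho> (seg_left l, seg_y l) l" if "l \<in> L" for l
    using assms(2,3) that by (simp add: covers_def seg_set_eq infdist_zero)
  then have "\<exists>n P. finite P \<and> card P = n \<and> (\<forall>l\<in>L. \<exists>s\<in>P. covers \<rho> s l)"
    using assms(1) by (intro exI[of _ "card ((\<lambda>l. (seg_left l, seg_y l)) ` L)"]) blast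
  from LeastI_ex[OF this] show ?thesis using that unfolding OPT_def by blast
qed

lemma strip_greedy_iterations_le_3OPT:
  assumes "finite L" "\<rho> > 0" "finite J" "\<forall>l\<in>L. seg_left l \<le> seg_right l"
    and "\<forall>j\<in>J. strip_greedy \<rho> y0 j (S j) (Q j) (Z j) \<and> S j \<subseteq> L
           \<and> (\<forall>l\<in>S j. in_band \<rho> y0 j l)"
  shows "(\<Sum>j\<in>J. Z j) \<le> 3 * OPT \<rho> L"
proof -
  have "\<forall>j\<in>J. \<exists>C\<subseteq>S j. finite C \<and> card C = Z j \<and> hipp_independent \<rho> C"
  proof
    fix j assume "j \<in> J"
    then have "strip_greedy \<rho> y0 j (S j) (Q j) (Z j)" using assms(5) by blast
    then show "\<exists>C\<subseteq>S j. finite C \<and> card C = Z j \<and> hipp_independent \<rho> C"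
      by (rule strip_greedy_independent)
  qed
  from bchoice[OF this] obtain C where C: "\<forall>j\<in>J. C j \<subseteq> S j \<and> finite (C j)
      \<and> card (C j) = Z j \<and> hipp_independent \<rho> (C j)"
    by blast
  obtain P where P: "finite P" "card P = OPT \<rho> L" "\<forall>l\<in>L. \<exists>s\<in>P. covers \<rho> s l"
    by (rule OPT_attained[OF assms(1,2,4)])
  have "(\<Sum>j\<in>J. card (C j)) \<le> 3 * card P"
  proof (rule independent_bands_packing[OF assms(2,3) P(1)])
    show "\<forall>j\<in>J. finite (C j) \<and> hipp_independent \<rho> (C j) \<and> (\<forall>c\<in>C j. in_band \<rho> y0 j c)"
      using C assms(5) by blast
    show "\<forall>j\<in>J. \<forall>c\<in>C j. \<exists>p\<in>P. covers \<rho> p c"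
    proof (intro ballI)
      fix j c assume "j \<in> J" "c \<in> C j"
      then have "c \<in> L" using C assms(5) by blast
      then show "\<exists>p\<in>P. covers \<rho> p c" using P(3) by blast
    qed
  qed
  moreover have "(\<Sum>j\<in>J. card (C j)) = (\<Sum>j\<in>J. Z j)"
    using C by (intro sum.cong) auto
  ultimately show ?thesis using P(2) by simp
qed

theorem lemma3:
  fixes L :: "hseg set" and \<rho> x0 xm y0 h :: real
    and Q :: "nat \<Rightarrow> (real \<times> real) set" and Z :: "nat \<Rightarrow> nat"
  assumes "finite L" and "\<rho> > 0" and "h > 0" and "x0 \<le> xm"
    and "\<forall>l\<in>L. seg_in_rect x0 xm y0 h l"
    and "\<forall>j\<in>{1..num_strips h \<rho>}. strip_greedy \<rho> y0 j (strip_segs L y0 h \<rho> j) (Q j) (Z j)"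
  shows "(\<forall>l\<in>L. \<exists>s\<in>(\<Union>j\<in>{1..num_strips h \<rho>}. Q j). covers \<rho> s l)
       \<and> card (\<Union>j\<in>{1..num_strips h \<rho>}. Q j) \<le> 6 * OPT \<rho> L
       \<and> real (\<Sum>j=1..num_strips h \<rho>. Z j) / 3 \<le> real (OPT \<rho> L)"
proof -
  define J where "J = {1..num_strips h \<rho>}"
  have greedy: "strip_greedy \<rho> y0 j (strip_segs L y0 h \<rho> j) (Q j) (Z j)" if "j \<in> J" for j
    using assms(6) that unfolding J_def by blast
  have band: "\<forall>l\<in>strip_segs L y0 h \<rho> j. in_band \<rho> y0 j l" for j
    using strip_segs_in_band[OF assms(3,2,5)] by blast
  have cover: "\<exists>s\<in>(\<Union>j\<in>J. Q j). covers \<rho> s l" if l: "l \<in> L" for l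
  proof -
    obtain j where "j \<in> J" "l \<in> strip_segs L y0 h \<rho> j"
      using seg_in_some_strip[OF assms(3,2)] assms(5) l unfolding J_def strip_segs_def by blast
    then show ?thesis using strip_greedy_covers[OF greedy assms(2) band] by blast
  qed
  have Z: "(\<Sum>j\<in>J. Z j) \<le> 3 * OPT \<rho> L"
  proof (rule strip_greedy_iterations_le_3OPT[OF assms(1,2), where S="strip_segs L y0 h \<rho>"])
    show "finite J" "\<forall>l\<in>L. seg_left l \<le> seg_right l"
      using assms(5) by (auto simp: J_def seg_in_rect_def)
    show "\<forall>j\<in>J. strip_greedy \<rho> y0 j (strip_segs L y0 h \<rho> j) (Q j) (Z j)
        \<and> strip_segs L y0 h \<rho> j \<subseteq> L \<and> (\<forall>l\<in>strip_segs L y0 h \<rho> j. in_band \<rho> y0 j l)"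
      using greedy band unfolding strip_segs_def by blast
  qed
  have "card (\<Union>j\<in>J. Q j) \<le> (\<Sum>j\<in>J. card (Q j))" by (rule card_UN_le) (simp add: J_def)
  also have "\<dots> \<le> (\<Sum>j\<in>J. 2 * Z j)" using strip_greedy_card greedy by (intro sum_mono) blast
  also have "\<dots> \<le> 6 * OPT \<rho> L" using Z by (simp add: sum_distrib_left[symmetric])
  finally have "card (\<Union>j\<in>J. Q j) \<le> 6 * OPT \<rho> L" .
  moreover have "real (\<Sum>j\<in>J. Z j) / 3 \<le> real (OPT \<rho> L)" using Z by linarith
  ultimately show ?thesis using cover unfolding J_def by blast
qed

end
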